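(* Let $\mathcal G$ be an ample groupoid and define the relation $\rho$ on $A_{\mathbb B}(\mathcal G)$ by $f\,\rho\,g$ iff $\operatorname{Eq}(f,g)=\{\alpha\in\mathcal G: f(\alpha)=g(\alpha)\}$ is dense in $\mathcal G$. Then (1) $\rho$ is a congruence on $A_{\mathbb B}(\mathcal G)$; (2) if in addition $\mathcal G$ is topologically principal, then $\rho$ coincides with the congruence $\equiv$ on $A_{\mathbb B}(\mathcal G)$.
   Context: $\mathbb B=(\{0,1\},\text{or},\text{and})$ is the Boolean semifield. An ample groupoid is a topological groupoid whose unit space $\mathcal G^{(0)}$ is locally compact Hausdorff and totally disconnected and whose source and range maps $s,r$ are local homeomorphisms ($\mathcal G$ need not be Hausdorff). The Steinberg algebra $A_{\mathbb B}(\mathcal G)$ is the set of $\mathbb B$-valued functions on $\mathcal G$ that are finite sums of characteristic functions $1_U$ of compact open bisections, with pointwise addition and convolution $(f*g)(\gamma)=\sum_{\alpha\beta=\gamma}f(\alpha)g(\beta)$. $\mathcal T$ is the set of units $u$ whose isotropy group $\{\gamma:s(\gamma)=r(\gamma)=u\}$ is trivial; $\mathcal G$ is topologically principal if $\mathcal T$ is dense in $\mathcal G^{(0)}$. The relation $\equiv$ is defined by $f\equiv g$ iff $f(\alpha)=g(\alpha)$ for all $\alpha$ with $s(\alpha),r(\alpha)\in\mathcal T$. A congruence is an equivalence relation compatible with addition and with left and right multiplication. *)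

theory Defs
  imports "HOL-Analysis.Analysis"
begin

text \<open>A topological groupoid is given by a topology T on the arrows (carrier topspace T),
  a set of units G0, source s, range r, a partial multiplication mu (meaningful when
  s a = r b) and an inversion iv.\<close>

definition composable_pairs ::
  "'a topology \<Rightarrow> ('a \<Rightarrow> 'a) \<Rightarrow> ('a \<Rightarrow> 'a) \<Rightarrow> ('a \<times> 'a) set" where
  "composable_pairs T s r = {(a, b). a \<in> topspace T \<and> b \<in> topspace T \<and> s a = r b}"

definition groupoid ::
  "'a topology \<Rightarrow> 'a set \<Rightarrow> ('a \<Rightarrow> 'a) \<Rightarrow> ('a \<Rightarrow> 'a) \<Rightarrow> ('a \<Rightarrow> 'a \<Rightarrow> 'a) \<Rightarrow> ('a \<Rightarrow> 'a) \<Rightarrow> bool" where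
  "groupoid T G0 s r mu iv \<longleftrightarrow>
     (let G = topspace T in
      G0 \<subseteq> G \<and>
      (\<forall>a\<in>G. s a \<in> G0 \<and> r a \<in> G0) \<and>
      (\<forall>u\<in>G0. s u = u \<and> r u = u) \<and>
      (\<forall>a\<in>G. \<forall>b\<in>G. s a = r b \<longrightarrow>
          mu a b \<in> G \<and> s (mu a b) = s b \<and> r (mu a b) = r a) \<and>
      (\<forall>a\<in>G. \<forall>b\<in>G. \<forall>c\<in>G. s a = r b \<and> s b = r c \<longrightarrow>
          mu (mu a b) c = mu a (mu b c)) \<and>
      (\<forall>a\<in>G. mu (r a) a = a \<and> mu a (s a) = a) \<and>
      (\<forall>a\<in>G. iv a \<in> G \<and> s (iv a) = r a \<and> r (iv a) = s a \<and>
          mu a (iv a) = r a \<and> mu (iv a) a = s a))"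

definition topological_groupoid ::
  "'a topology \<Rightarrow> 'a set \<Rightarrow> ('a \<Rightarrow> 'a) \<Rightarrow> ('a \<Rightarrow> 'a) \<Rightarrow> ('a \<Rightarrow> 'a \<Rightarrow> 'a) \<Rightarrow> ('a \<Rightarrow> 'a) \<Rightarrow> bool" where
  "topological_groupoid T G0 s r mu iv \<longleftrightarrow>
     groupoid T G0 s r mu iv \<and>
     continuous_map (subtopology (prod_topology T T) (composable_pairs T s r)) T
        (\<lambda>(a, b). mu a b) \<and>
     continuous_map T T iv"

definition local_homeomorphism_map :: "'a topology \<Rightarrow> 'b topology \<Rightarrow> ('a \<Rightarrow> 'b) \<Rightarrow> bool" where
  "local_homeomorphism_map X Y f \<longleftrightarrow>
     f ` topspace X \<subseteq> topspace Y \<and>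
     (\<forall>x\<in>topspace X. \<exists>U. openin X U \<and> x \<in> U \<and> openin Y (f ` U) \<and>
        homeomorphic_map (subtopology X U) (subtopology Y (f ` U)) f)"

definition totally_disconnected_space :: "'a topology \<Rightarrow> bool" where
  "totally_disconnected_space X \<longleftrightarrow>
     (\<forall>S. connectedin X S \<longrightarrow> (\<exists>x. S \<subseteq> {x}))"

definition ample_groupoid ::
  "'a topology \<Rightarrow> 'a set \<Rightarrow> ('a \<Rightarrow> 'a) \<Rightarrow> ('a \<Rightarrow> 'a) \<Rightarrow> ('a \<Rightarrow> 'a \<Rightarrow> 'a) \<Rightarrow> ('a \<Rightarrow> 'a) \<Rightarrow> bool" where
  "ample_groupoid T G0 s r mu iv \<longleftrightarrow>
     topological_groupoid T G0 s r mu iv \<and>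
     locally_compact_space (subtopology T G0) \<and>
     Hausdorff_space (subtopology T G0) \<and>
     totally_disconnected_space (subtopology T G0) \<and>
     local_homeomorphism_map T (subtopology T G0) s \<and>
     local_homeomorphism_map T (subtopology T G0) r"

definition compact_open_bisection ::
  "'a topology \<Rightarrow> ('a \<Rightarrow> 'a) \<Rightarrow> ('a \<Rightarrow> 'a) \<Rightarrow> 'a set \<Rightarrow> bool" where
  "compact_open_bisection T s r U \<longleftrightarrow>
     openin T U \<and> compactin T U \<and> inj_on s U \<and> inj_on r U"

text \<open>Steinberg algebra over the Boolean semifield (values in bool, addition = or,
  multiplication = and): finite sums of characteristic functions of compact open bisections.\<close>
definition steinberg_B ::
  "'a topology \<Rightarrow> ('a \<Rightarrow> 'a) \<Rightarrow> ('a \<Rightarrow> 'a) \<Rightarrow> ('a \<Rightarrow> bool) set" where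
  "steinberg_B T s r =
     {f. \<exists>F. finite F \<and> (\<forall>U\<in>F. compact_open_bisection T s r U) \<and>
            f = (\<lambda>x. \<exists>U\<in>F. x \<in> U)}"

definition B_add :: "('a \<Rightarrow> bool) \<Rightarrow> ('a \<Rightarrow> bool) \<Rightarrow> 'a \<Rightarrow> bool" where
  "B_add f g = (\<lambda>x. f x \<or> g x)"

text \<open>Convolution: (f*g)(\<gamma>) = sum over \<alpha>\<beta> = \<gamma> of f(\<alpha>)g(\<beta>), with Boolean sum = exists.\<close>
definition B_conv ::
  "'a topology \<Rightarrow> ('a \<Rightarrow> 'a) \<Rightarrow> ('a \<Rightarrow> 'a) \<Rightarrow> ('a \<Rightarrow> 'a \<Rightarrow> 'a) \<Rightarrow>
   ('a \<Rightarrow> bool) \<Rightarrow> ('a \<Rightarrow> bool) \<Rightarrow> 'a \<Rightarrow> bool" where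
  "B_conv T s r mu f g = (\<lambda>\<gamma>. \<exists>\<alpha>\<in>topspace T. \<exists>\<beta>\<in>topspace T.
       s \<alpha> = r \<beta> \<and> mu \<alpha> \<beta> = \<gamma> \<and> f \<alpha> \<and> g \<beta>)"

definition congruence_on ::
  "'f set \<Rightarrow> ('f \<Rightarrow> 'f \<Rightarrow> 'f) \<Rightarrow> ('f \<Rightarrow> 'f \<Rightarrow> 'f) \<Rightarrow> ('f \<Rightarrow> 'f \<Rightarrow> bool) \<Rightarrow> bool" where
  "congruence_on A add mul R \<longleftrightarrow>
     (\<forall>f\<in>A. R f f) \<and>
     (\<forall>f\<in>A. \<forall>g\<in>A. R f g \<longrightarrow> R g f) \<and>
     (\<forall>f\<in>A. \<forall>g\<in>A. \<forall>h\<in>A. R f g \<and> R g h \<longrightarrow> R f h) \<and>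
     (\<forall>f\<in>A. \<forall>g\<in>A. \<forall>h\<in>A. R f g \<longrightarrow>
        R (add f h) (add g h) \<and> R (mul h f) (mul h g) \<and> R (mul f h) (mul g h))"

definition rho_rel :: "'a topology \<Rightarrow> ('a \<Rightarrow> bool) \<Rightarrow> ('a \<Rightarrow> bool) \<Rightarrow> bool" where
  "rho_rel T f g \<longleftrightarrow> T closure_of {\<alpha> \<in> topspace T. f \<alpha> = g \<alpha>} = topspace T"

definition trivial_isotropy_units ::
  "'a topology \<Rightarrow> 'a set \<Rightarrow> ('a \<Rightarrow> 'a) \<Rightarrow> ('a \<Rightarrow> 'a) \<Rightarrow> 'a set" where
  "trivial_isotropy_units T G0 s r =
     {u \<in> G0. \<forall>\<gamma>\<in>topspace T. s \<gamma> = u \<and> r \<gamma> = u \<longrightarrow> \<gamma> = u}"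

definition topologically_principal ::
  "'a topology \<Rightarrow> 'a set \<Rightarrow> ('a \<Rightarrow> 'a) \<Rightarrow> ('a \<Rightarrow> 'a) \<Rightarrow> bool" where
  "topologically_principal T G0 s r \<longleftrightarrow>
     (subtopology T G0) closure_of (trivial_isotropy_units T G0 s r) = G0"

definition equiv_T ::
  "'a topology \<Rightarrow> 'a set \<Rightarrow> ('a \<Rightarrow> 'a) \<Rightarrow> ('a \<Rightarrow> 'a) \<Rightarrow> ('a \<Rightarrow> bool) \<Rightarrow> ('a \<Rightarrow> bool) \<Rightarrow> bool" where
  "equiv_T T G0 s r f g \<longleftrightarrow>
     (\<forall>\<alpha>\<in>topspace T. s \<alpha> \<in> trivial_isotropy_units T G0 s r \<and>
                      r \<alpha> \<in> trivial_isotropy_units T G0 s r \<longrightarrow> f \<alpha> = g \<alpha>)"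

end

theory Submission
  imports Defs
begin

text \<open>Every element of the Steinberg algebra is the indicator of an open set that is a finite
  union of compact sets, and for indicators of open sets \<open>U\<close>, \<open>V\<close> the relation \<open>\<rho>\<close> says
  that each of \<open>U\<close>, \<open>V\<close> lies in the closure of the other. This condition is transitive and
  survives unions; it survives products with a fixed open set because multiplication is
  continuous and \<open>s\<close>, \<open>r\<close> are open, so approximating one factor approximates the product.

  If the groupoid is topologically principal, the arrows with source and range in \<open>\<T>\<close> are
  dense, which turns \<open>\<equiv>\<close> into \<open>\<rho>\<close>. Conversely, an arrow whose range has trivial isotropy is
  the only arrow with its source and range, so the map \<open>(s, r)\<close> into a Hausdorff space keeps
  it out of the closure of any compact set missing it, although the groupoid itself need not
  be Hausdorff.\<close>

lemma open_map_local_homeomorphism_map: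
  assumes "local_homeomorphism_map X Y f"
  shows "open_map X Y f"
  unfolding open_map_def
proof (intro allI impI)
  fix W assume W: "openin X W"
  show "openin Y (f ` W)"
  proof (subst openin_subopen, intro ballI)
    fix y assume "y \<in> f ` W"
    then obtain x where x: "x \<in> W" "y = f x" by auto
    then have "x \<in> topspace X" using W openin_subset by blast
    then obtain U where U: "openin X U" "x \<in> U" "openin Y (f ` U)"
      "homeomorphic_map (subtopology X U) (subtopology Y (f ` U)) f"
      using assms unfolding local_homeomorphism_map_def by blast
    have "openin (subtopology X U) (W \<inter> U)"
      using W by (simp add: openin_subtopology_Int)
    then have "openin (subtopology Y (f ` U)) (f ` (W \<inter> U))"
      using homeomorphic_imp_open_map[OF U(4)] open_map_def by blast
    then have "openin Y (f ` (W \<inter> U))" using U(3) openin_trans_full by blast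
    then show "\<exists>V. openin Y V \<and> y \<in> V \<and> V \<subseteq> f ` W"
      using x U(2) by blast
  qed
qed

lemma continuous_map_local_homeomorphism_map:
  assumes "local_homeomorphism_map X Y f"
  shows "continuous_map X Y f"
proof (rule pasting_lemma[where I = "{U. openin X U \<and> continuous_map (subtopology X U) Y f}"
      and T = "\<lambda>U. U" and f = "\<lambda>_. f"])
  fix x assume "x \<in> topspace X"
  then obtain U where U: "openin X U" "x \<in> U"
    "homeomorphic_map (subtopology X U) (subtopology Y (f ` U)) f"
    using assms unfolding local_homeomorphism_map_def by blast
  then have "continuous_map (subtopology X U) Y f"
    using homeomorphic_imp_continuous_map continuous_map_in_subtopology by blast
  with U show "\<exists>U. U \<in> {U. openin X U \<and> continuous_map (subtopology X U) Y f} \<and> x \<in> U \<and> f x = f x"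
    by blast
qed simp_all

lemma not_in_closure_of_compactin:
  assumes f: "continuous_map X Y f" and "Hausdorff_space Y" "compactin X K" "f x \<notin> f ` K"
  shows "x \<notin> X closure_of K"
proof
  assume "x \<in> X closure_of K"
  then have "f x \<in> Y closure_of (f ` K)"
    using continuous_map_image_closure_subset[OF f] by blast
  moreover have "closedin Y (f ` K)"
    using assms by (simp add: compactin_imp_closedin image_compactin)
  ultimately show False using assms(4) closure_of_closedin by metis
qed

lemma subset_closure_of_trans: "A \<subseteq> X closure_of B \<Longrightarrow> B \<subseteq> X closure_of C \<Longrightarrow> A \<subseteq> X closure_of C"
  by (metis closure_of_closure_of closure_of_mono order_trans)

lemma rho_rel_refl: "rho_rel T f f"
  unfolding rho_rel_def by (simp add: closure_of_topspace)

lemma rho_rel_sym: "rho_rel T f g \<Longrightarrow> rho_rel T g f"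
  unfolding rho_rel_def by (simp add: eq_commute)

lemma rho_rel_indicatorI:
  assumes "A \<union> B \<subseteq> T closure_of (A \<inter> B)"
  shows "rho_rel T (\<lambda>x. x \<in> A) (\<lambda>x. x \<in> B)"
  unfolding rho_rel_def dense_intersects_open
proof (intro allI impI)
  fix N assume N: "openin T N \<and> N \<noteq> {}"
  show "{x \<in> topspace T. (x \<in> A) = (x \<in> B)} \<inter> N \<noteq> {}"
  proof (cases "N \<inter> (A \<union> B) = {}")
    case True
    then show ?thesis using N openin_subset by fastforce
  next
    case False
    then obtain x where "x \<in> N" "x \<in> T closure_of (A \<inter> B)" using assms by blast
    then obtain y where "y \<in> A \<inter> B" "y \<in> N" using N unfolding in_closure_of by blast
    then show ?thesis using N openin_subset by blast
  qed
qed

lemma rho_rel_indicator_iff_closure_of_Int: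
  assumes U: "openin T U" and V: "openin T V"
  shows "rho_rel T (\<lambda>x. x \<in> U) (\<lambda>x. x \<in> V) \<longleftrightarrow> U \<union> V \<subseteq> T closure_of (U \<inter> V)"
proof
  assume "rho_rel T (\<lambda>x. x \<in> U) (\<lambda>x. x \<in> V)"
  then have dense: "T closure_of {x \<in> topspace T. (x \<in> U) = (x \<in> V)} = topspace T"
    unfolding rho_rel_def .
  have "W \<subseteq> T closure_of (U \<inter> V)" if W: "openin T W" "W \<subseteq> U \<union> V" for W
  proof -
    have "W \<subseteq> W \<inter> T closure_of {x \<in> topspace T. (x \<in> U) = (x \<in> V)}"
      using dense W openin_subset by blast
    also have "\<dots> \<subseteq> T closure_of (W \<inter> {x \<in> topspace T. (x \<in> U) = (x \<in> V)})"
      by (rule openin_Int_closure_of_subset[OF W(1)])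
    also have "\<dots> \<subseteq> T closure_of (U \<inter> V)"
      using W(2) by (intro closure_of_mono) blast
    finally show ?thesis .
  qed
  then show "U \<union> V \<subseteq> T closure_of (U \<inter> V)" using U V by blast
qed (rule rho_rel_indicatorI)

lemma openin_subset_closure_of_Int_iff:
  assumes "openin X U"
  shows "U \<subseteq> X closure_of (U \<inter> V) \<longleftrightarrow> U \<subseteq> X closure_of V"
  using openin_Int_closure_of_subset[OF assms, of V] closure_of_mono[of "U \<inter> V" V X] by blast

lemma rho_rel_indicator_iff:
  assumes U: "openin T U" and V: "openin T V"
  shows "rho_rel T (\<lambda>x. x \<in> U) (\<lambda>x. x \<in> V) \<longleftrightarrow> U \<subseteq> T closure_of V \<and> V \<subseteq> T closure_of U"
proof -
  have "V \<subseteq> T closure_of (U \<inter> V) \<longleftrightarrow> V \<subseteq> T closure_of U"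
    unfolding inf_commute[of U V] by (rule openin_subset_closure_of_Int_iff[OF V])
  then show ?thesis
    using rho_rel_indicator_iff_closure_of_Int[OF U V] openin_subset_closure_of_Int_iff[OF U, of V] by blast
qed

lemma rho_rel_indicator_trans:
  assumes U: "openin T U" and V: "openin T V" and W: "openin T W"
    and "rho_rel T (\<lambda>x. x \<in> U) (\<lambda>x. x \<in> V)" "rho_rel T (\<lambda>x. x \<in> V) (\<lambda>x. x \<in> W)"
  shows "rho_rel T (\<lambda>x. x \<in> U) (\<lambda>x. x \<in> W)"
proof -
  have "U \<subseteq> T closure_of V" "V \<subseteq> T closure_of U" "V \<subseteq> T closure_of W" "W \<subseteq> T closure_of V"
    using assms rho_rel_indicator_iff[OF U V] rho_rel_indicator_iff[OF V W] by simp_all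
  then show ?thesis
    unfolding rho_rel_indicator_iff[OF U W] by (meson subset_closure_of_trans)
qed

lemma rho_rel_indicator_Un:
  assumes U: "openin T U" and V: "openin T V" and W: "openin T W"
    and "rho_rel T (\<lambda>x. x \<in> U) (\<lambda>x. x \<in> V)"
  shows "rho_rel T (\<lambda>x. x \<in> U \<union> W) (\<lambda>x. x \<in> V \<union> W)"
proof -
  have "U \<subseteq> T closure_of V" "V \<subseteq> T closure_of U" "W \<subseteq> T closure_of W"
    using assms rho_rel_indicator_iff[OF U V] by (simp_all add: closure_of_subset openin_subset)
  then show ?thesis
    unfolding rho_rel_indicator_iff[OF openin_Un[OF U W] openin_Un[OF V W]] closure_of_Un
    by blast
qed

lemma steinberg_B_indicator:
  assumes "f \<in> steinberg_B T s r"
  obtains F where "finite F" "\<forall>K\<in>F. compactin T K" "openin T (\<Union>F)" "f = (\<lambda>x. x \<in> \<Union>F)"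
proof -
  obtain F where F: "finite F" "\<forall>U\<in>F. compact_open_bisection T s r U"
    "f = (\<lambda>x. \<exists>U\<in>F. x \<in> U)"
    using assms unfolding steinberg_B_def by blast
  then have "\<forall>K\<in>F. compactin T K" "openin T (\<Union>F)"
    unfolding compact_open_bisection_def by blast+
  with F show thesis using that by auto
qed

lemma steinberg_B_open_indicator:
  assumes "f \<in> steinberg_B T s r"
  obtains U where "openin T U" "f = (\<lambda>x. x \<in> U)"
  using steinberg_B_indicator[OF assms] by metis

locale groupoid_setting =
  fixes T :: "'a topology" and G0 :: "'a set" and s r iv :: "'a \<Rightarrow> 'a"
    and mu :: "'a \<Rightarrow> 'a \<Rightarrow> 'a"
  assumes groupoid: "groupoid T G0 s r mu iv"
begin

lemma units_subset_topspace: "G0 \<subseteq> topspace T"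
  using groupoid unfolding groupoid_def Let_def by meson

lemma source_range_in_units: "a \<in> topspace T \<Longrightarrow> s a \<in> G0 \<and> r a \<in> G0"
  using groupoid unfolding groupoid_def Let_def by meson

lemma source_range_unit: "u \<in> G0 \<Longrightarrow> s u = u \<and> r u = u"
  using groupoid unfolding groupoid_def Let_def by meson

lemma mu_closed:
  "a \<in> topspace T \<Longrightarrow> b \<in> topspace T \<Longrightarrow> s a = r b \<Longrightarrow>
    mu a b \<in> topspace T \<and> s (mu a b) = s b \<and> r (mu a b) = r a"
  using groupoid unfolding groupoid_def Let_def by meson

lemma mu_assoc:
  "a \<in> topspace T \<Longrightarrow> b \<in> topspace T \<Longrightarrow> c \<in> topspace T \<Longrightarrow> s a = r b \<Longrightarrow> s b = r c \<Longrightarrow>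
    mu (mu a b) c = mu a (mu b c)"
  using groupoid unfolding groupoid_def Let_def by meson

lemma mu_units: "a \<in> topspace T \<Longrightarrow> mu (r a) a = a \<and> mu a (s a) = a"
  using groupoid unfolding groupoid_def Let_def by meson

lemma iv_inverse:
  "a \<in> topspace T \<Longrightarrow> iv a \<in> topspace T \<and> s (iv a) = r a \<and> r (iv a) = s a \<and>
    mu a (iv a) = r a \<and> mu (iv a) a = s a"
  using groupoid unfolding groupoid_def Let_def by meson

abbreviation \<T> where "\<T> \<equiv> trivial_isotropy_units T G0 s r"

text \<open>The arrow \<open>\<beta> \<alpha>\<inverse>\<close> lies in the isotropy group at \<open>r \<alpha>\<close>.\<close>
lemma eq_if_source_range_eq_trivial_isotropy:
  assumes \<alpha>: "\<alpha> \<in> topspace T" and \<beta>: "\<beta> \<in> topspace T"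
    and ss: "s \<beta> = s \<alpha>" and rr: "r \<beta> = r \<alpha>" and triv: "r \<alpha> \<in> \<T>"
  shows "\<beta> = \<alpha>"
proof -
  have i: "iv \<alpha> \<in> topspace T" "s (iv \<alpha>) = r \<alpha>" "r (iv \<alpha>) = s \<alpha>" "mu (iv \<alpha>) \<alpha> = s \<alpha>"
    using iv_inverse[OF \<alpha>] by auto
  have c: "s \<beta> = r (iv \<alpha>)" using ss i by simp
  have "mu \<beta> (iv \<alpha>) \<in> topspace T" "s (mu \<beta> (iv \<alpha>)) = r \<alpha>" "r (mu \<beta> (iv \<alpha>)) = r \<alpha>"
    using mu_closed[OF \<beta> i(1) c] i rr by auto
  then have loop: "mu \<beta> (iv \<alpha>) = r \<alpha>"
    using triv unfolding trivial_isotropy_units_def by blast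
  have "\<beta> = mu \<beta> (mu (iv \<alpha>) \<alpha>)" using mu_units[OF \<beta>] ss i by simp
  also have "\<dots> = mu (mu \<beta> (iv \<alpha>)) \<alpha>" using mu_assoc[OF \<beta> i(1) \<alpha> c i(2)] by simp
  also have "\<dots> = \<alpha>" using loop mu_units[OF \<alpha>] by simp
  finally show ?thesis .
qed

text \<open>Conjugation by \<open>y\<close> identifies the isotropy groups at \<open>r y\<close> and \<open>s y\<close>.\<close>
lemma range_in_trivial_isotropy_units:
  assumes y: "y \<in> topspace T" and triv: "s y \<in> \<T>"
  shows "r y \<in> \<T>"
  unfolding trivial_isotropy_units_def
proof (intro CollectI conjI ballI impI)
  show ry: "r y \<in> G0" using source_range_in_units[OF y] by blast
  fix \<gamma> assume \<gamma>: "\<gamma> \<in> topspace T" "s \<gamma> = r y \<and> r \<gamma> = r y"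
  have i: "iv y \<in> topspace T" "s (iv y) = r y" "r (iv y) = s y" "mu y (iv y) = r y"
    using iv_inverse[OF y] by auto
  have \<gamma>y: "mu \<gamma> y \<in> topspace T" "s (mu \<gamma> y) = s y" "r (mu \<gamma> y) = r y"
    using mu_closed[OF \<gamma>(1) y] \<gamma> by auto
  have c: "s (iv y) = r (mu \<gamma> y)" using i \<gamma>y by simp
  have "mu (iv y) (mu \<gamma> y) \<in> topspace T" "s (mu (iv y) (mu \<gamma> y)) = s y"
    "r (mu (iv y) (mu \<gamma> y)) = s y"
    using mu_closed[OF i(1) \<gamma>y(1) c] i \<gamma>y by auto
  then have conj: "mu (iv y) (mu \<gamma> y) = s y"
    using triv unfolding trivial_isotropy_units_def by blast
  have "y = mu y (mu (iv y) (mu \<gamma> y))" using mu_units[OF y] conj by simp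
  also have "\<dots> = mu (mu y (iv y)) (mu \<gamma> y)"
    using mu_assoc[OF y i(1) \<gamma>y(1)] i c by simp
  also have "\<dots> = mu (mu (r y) \<gamma>) y"
    using i mu_assoc[OF _ \<gamma>(1) y] ry units_subset_topspace source_range_unit[OF ry] \<gamma> by auto
  also have "\<dots> = mu \<gamma> y" using mu_units[OF \<gamma>(1)] \<gamma> by simp
  finally have \<gamma>y_eq: "mu \<gamma> y = y" by simp
  have "\<gamma> = mu \<gamma> (mu y (iv y))" using mu_units[OF \<gamma>(1)] \<gamma> i by simp
  also have "\<dots> = mu (mu \<gamma> y) (iv y)" using mu_assoc[OF \<gamma>(1) y i(1)] \<gamma> i by simp
  also have "\<dots> = r y" using \<gamma>y_eq i by simp
  finally show "\<gamma> = r y" .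
qed

definition mult_set :: "'a set \<Rightarrow> 'a set \<Rightarrow> 'a set" where
  "mult_set A B = {mu a b | a b. a \<in> A \<and> b \<in> B \<and> s a = r b}"

lemma mult_set_iff: "\<gamma> \<in> mult_set A B \<longleftrightarrow> (\<exists>a\<in>A. \<exists>b\<in>B. s a = r b \<and> \<gamma> = mu a b)"
  unfolding mult_set_def by blast

lemma mult_set_mono: "A \<subseteq> A' \<Longrightarrow> B \<subseteq> B' \<Longrightarrow> mult_set A B \<subseteq> mult_set A' B'"
  unfolding mult_set_def by blast

lemma B_conv_indicators:
  assumes "A \<subseteq> topspace T" "B \<subseteq> topspace T"
  shows "B_conv T s r mu (\<lambda>x. x \<in> A) (\<lambda>x. x \<in> B) = (\<lambda>x. x \<in> mult_set A B)"
  unfolding B_conv_def mult_set_def using assms by (intro ext) blast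

end

locale ample_setting =
  fixes T :: "'a topology" and G0 :: "'a set" and s r iv :: "'a \<Rightarrow> 'a"
    and mu :: "'a \<Rightarrow> 'a \<Rightarrow> 'a"
  assumes ample: "ample_groupoid T G0 s r mu iv"
begin

sublocale groupoid_setting
  using ample unfolding ample_groupoid_def topological_groupoid_def
  by unfold_locales blast

lemma continuous_map_source: "continuous_map T (subtopology T G0) s"
  using ample continuous_map_local_homeomorphism_map unfolding ample_groupoid_def by blast

lemma continuous_map_range: "continuous_map T (subtopology T G0) r"
  using ample continuous_map_local_homeomorphism_map unfolding ample_groupoid_def by blast

lemma open_map_source: "open_map T (subtopology T G0) s"
  using ample open_map_local_homeomorphism_map unfolding ample_groupoid_def by blast

lemma open_map_range: "open_map T (subtopology T G0) r"
  using ample open_map_local_homeomorphism_map unfolding ample_groupoid_def by blast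

lemma Hausdorff_space_units: "Hausdorff_space (subtopology T G0)"
  using ample unfolding ample_groupoid_def by blast

lemma mult_set_nbhds:
  assumes a: "a \<in> topspace T" and b: "b \<in> topspace T" and ab: "s a = r b"
    and N: "openin T N" "mu a b \<in> N"
  obtains A B where "openin T A" "openin T B" "a \<in> A" "b \<in> B" "mult_set A B \<subseteq> N"
proof -
  let ?C = "composable_pairs T s r"
  let ?P = "{p \<in> topspace (subtopology (prod_topology T T) ?C). (\<lambda>(a, b). mu a b) p \<in> N}"
  have "continuous_map (subtopology (prod_topology T T) ?C) T (\<lambda>(a, b). mu a b)"
    using ample unfolding ample_groupoid_def topological_groupoid_def by blast
  then have "openin (subtopology (prod_topology T T) ?C) ?P"
    using N(1) by (rule openin_continuous_map_preimage)
  then obtain W where W: "openin (prod_topology T T) W" "?P = W \<inter> ?C"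
    unfolding openin_subtopology by blast
  have "(a, b) \<in> ?P"
    using a b ab N(2) unfolding composable_pairs_def by simp
  then have "(a, b) \<in> W" using W(2) by blast
  then obtain A B where AB: "openin T A" "openin T B" "a \<in> A" "b \<in> B" "A \<times> B \<subseteq> W"
    using W(1) unfolding openin_prod_topology_alt by meson
  have "mu a' b' \<in> N" if "a' \<in> A" "b' \<in> B" "s a' = r b'" for a' b'
  proof -
    have "(a', b') \<in> W \<inter> ?C"
      using that AB openin_subset unfolding composable_pairs_def by blast
    then have "(a', b') \<in> ?P" using W(2) by argo
    then show ?thesis by simp
  qed
  then have "mult_set A B \<subseteq> N" by (auto simp: mult_set_iff)
  with AB show thesis using that by blast
qed

text \<open>Approximate \<open>a\<close> by \<open>a' \<in> A\<close> so closely that \<open>s a'\<close> is still the range of an arrow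
  of \<open>W\<close> near \<open>b\<close>: \<open>r\<close> is open and \<open>s\<close> continuous.\<close>
lemma mult_set_subset_closure_of_left:
  assumes W: "openin T W" and U: "U \<subseteq> T closure_of A"
  shows "mult_set U W \<subseteq> T closure_of (mult_set A W)"
proof
  fix \<gamma> assume "\<gamma> \<in> mult_set U W"
  then obtain a b where ab: "a \<in> U" "b \<in> W" "s a = r b" "\<gamma> = mu a b"
    by (auto simp: mult_set_iff)
  have a_cl: "a \<in> T closure_of A" using ab(1) U by blast
  then have a: "a \<in> topspace T" by (simp add: in_closure_of)
  have b: "b \<in> topspace T" using ab(2) W openin_subset by blast
  show "\<gamma> \<in> T closure_of (mult_set A W)"
    unfolding in_closure_of
  proof (intro conjI allI impI)
    show "\<gamma> \<in> topspace T" using mu_closed[OF a b ab(3)] ab(4) by simp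
    fix N assume N: "\<gamma> \<in> N \<and> openin T N"
    then obtain A' B' where AB: "openin T A'" "openin T B'" "a \<in> A'" "b \<in> B'"
      "mult_set A' B' \<subseteq> N"
      using mult_set_nbhds[OF a b ab(3)] ab(4) by metis
    have "openin (subtopology T G0) (r ` (B' \<inter> W))"
      using open_map_range openin_Int[OF AB(2) W] unfolding open_map_def by blast
    then have "openin T {x \<in> A'. s x \<in> r ` (B' \<inter> W)}"
      by (rule openin_continuous_map_preimage_gen[OF continuous_map_source AB(1)])
    moreover have "a \<in> {x \<in> A'. s x \<in> r ` (B' \<inter> W)}" using AB ab by auto
    moreover note a_cl
    ultimately have "{x \<in> A'. s x \<in> r ` (B' \<inter> W)} \<inter> A \<noteq> {}"
      using openin_Int_closure_of_eq_empty by blast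
    then obtain a' where a': "a' \<in> A" "a' \<in> A'" "s a' \<in> r ` (B' \<inter> W)" by blast
    then obtain b' where b': "b' \<in> B'" "b' \<in> W" "s a' = r b'" by blast
    have "mu a' b' \<in> mult_set A W" "mu a' b' \<in> mult_set A' B'"
      using a' b' by (auto simp: mult_set_iff)
    then show "\<exists>y. y \<in> mult_set A W \<and> y \<in> N" using AB(5) by blast
  qed
qed

lemma mult_set_subset_closure_of_right:
  assumes W: "openin T W" and U: "U \<subseteq> T closure_of A"
  shows "mult_set W U \<subseteq> T closure_of (mult_set W A)"
proof
  fix \<gamma> assume "\<gamma> \<in> mult_set W U"
  then obtain a b where ab: "a \<in> W" "b \<in> U" "s a = r b" "\<gamma> = mu a b"
    by (auto simp: mult_set_iff)
  have a: "a \<in> topspace T" using ab(1) W openin_subset by blast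
  have b_cl: "b \<in> T closure_of A" using ab(2) U by blast
  then have b: "b \<in> topspace T" by (simp add: in_closure_of)
  show "\<gamma> \<in> T closure_of (mult_set W A)"
    unfolding in_closure_of
  proof (intro conjI allI impI)
    show "\<gamma> \<in> topspace T" using mu_closed[OF a b ab(3)] ab(4) by simp
    fix N assume N: "\<gamma> \<in> N \<and> openin T N"
    then obtain A' B' where AB: "openin T A'" "openin T B'" "a \<in> A'" "b \<in> B'"
      "mult_set A' B' \<subseteq> N"
      using mult_set_nbhds[OF a b ab(3)] ab(4) by metis
    have "openin (subtopology T G0) (s ` (A' \<inter> W))"
      using open_map_source openin_Int[OF AB(1) W] unfolding open_map_def by blast
    then have "openin T {x \<in> B'. r x \<in> s ` (A' \<inter> W)}"
      by (rule openin_continuous_map_preimage_gen[OF continuous_map_range AB(2)])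
    moreover have "b \<in> {x \<in> B'. r x \<in> s ` (A' \<inter> W)}"
      using AB ab by (auto intro!: image_eqI[of _ _ a])
    moreover note b_cl
    ultimately have "{x \<in> B'. r x \<in> s ` (A' \<inter> W)} \<inter> A \<noteq> {}"
      using openin_Int_closure_of_eq_empty by blast
    then obtain b' where b': "b' \<in> A" "b' \<in> B'" "r b' \<in> s ` (A' \<inter> W)" by blast
    then obtain a' where a': "a' \<in> A'" "a' \<in> W" "s a' = r b'" by (metis IntE imageE)
    have "mu a' b' \<in> mult_set W A" "mu a' b' \<in> mult_set A' B'"
      using a' b' by (auto simp: mult_set_iff)
    then show "\<exists>y. y \<in> mult_set W A \<and> y \<in> N" using AB(5) by blast
  qed
qed

lemma rho_rel_mult_set:
  assumes U: "openin T U" and V: "openin T V" and W: "openin T W"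
    and "rho_rel T (\<lambda>x. x \<in> U) (\<lambda>x. x \<in> V)"
  shows "rho_rel T (\<lambda>x. x \<in> mult_set W U) (\<lambda>x. x \<in> mult_set W V)"
    and "rho_rel T (\<lambda>x. x \<in> mult_set U W) (\<lambda>x. x \<in> mult_set V W)"
proof -
  have "U \<union> V \<subseteq> T closure_of (U \<inter> V)"
    using assms(4) unfolding rho_rel_indicator_iff_closure_of_Int[OF U V] .
  then have UV: "U \<subseteq> T closure_of (U \<inter> V)" "V \<subseteq> T closure_of (U \<inter> V)" by simp_all
  have "mult_set W U \<union> mult_set W V \<subseteq> T closure_of (mult_set W (U \<inter> V))"
    using mult_set_subset_closure_of_right[OF W UV(1)] mult_set_subset_closure_of_right[OF W UV(2)]
    by (rule Un_least)
  also have "\<dots> \<subseteq> T closure_of (mult_set W U \<inter> mult_set W V)"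
    by (intro closure_of_mono) (simp add: mult_set_mono)
  finally show "rho_rel T (\<lambda>x. x \<in> mult_set W U) (\<lambda>x. x \<in> mult_set W V)"
    by (rule rho_rel_indicatorI)
  have "mult_set U W \<union> mult_set V W \<subseteq> T closure_of (mult_set (U \<inter> V) W)"
    using mult_set_subset_closure_of_left[OF W UV(1)] mult_set_subset_closure_of_left[OF W UV(2)]
    by (rule Un_least)
  also have "\<dots> \<subseteq> T closure_of (mult_set U W \<inter> mult_set V W)"
    by (intro closure_of_mono) (simp add: mult_set_mono)
  finally show "rho_rel T (\<lambda>x. x \<in> mult_set U W) (\<lambda>x. x \<in> mult_set V W)"
    by (rule rho_rel_indicatorI)
qed

lemma rho_rel_compatible:
  assumes "f \<in> steinberg_B T s r" "g \<in> steinberg_B T s r" "h \<in> steinberg_B T s r"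
    and fg: "rho_rel T f g"
  shows "rho_rel T g h \<Longrightarrow> rho_rel T f h"
    and "rho_rel T (B_add f h) (B_add g h)"
    and "rho_rel T (B_conv T s r mu h f) (B_conv T s r mu h g)"
    and "rho_rel T (B_conv T s r mu f h) (B_conv T s r mu g h)"
proof -
  obtain U where U: "openin T U" "f = (\<lambda>x. x \<in> U)" by (rule steinberg_B_open_indicator[OF assms(1)])
  obtain V where V: "openin T V" "g = (\<lambda>x. x \<in> V)" by (rule steinberg_B_open_indicator[OF assms(2)])
  obtain W where W: "openin T W" "h = (\<lambda>x. x \<in> W)" by (rule steinberg_B_open_indicator[OF assms(3)])
  have UV: "rho_rel T (\<lambda>x. x \<in> U) (\<lambda>x. x \<in> V)" using fg unfolding U(2) V(2) .
  show "rho_rel T g h \<Longrightarrow> rho_rel T f h"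
    unfolding U(2) V(2) W(2) by (rule rho_rel_indicator_trans[OF U(1) V(1) W(1) UV])
  have "B_add f h = (\<lambda>x. x \<in> U \<union> W)" "B_add g h = (\<lambda>x. x \<in> V \<union> W)"
    unfolding U(2) V(2) W(2) B_add_def by simp_all
  then show "rho_rel T (B_add f h) (B_add g h)"
    using rho_rel_indicator_Un[OF U(1) V(1) W(1) UV] by simp
  have sub: "U \<subseteq> topspace T" "V \<subseteq> topspace T" "W \<subseteq> topspace T"
    using U(1) V(1) W(1) by (simp_all add: openin_subset)
  show "rho_rel T (B_conv T s r mu h f) (B_conv T s r mu h g)"
    unfolding U(2) V(2) W(2) B_conv_indicators[OF sub(3) sub(1)] B_conv_indicators[OF sub(3) sub(2)]
    by (rule rho_rel_mult_set(1)[OF U(1) V(1) W(1) UV])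
  show "rho_rel T (B_conv T s r mu f h) (B_conv T s r mu g h)"
    unfolding U(2) V(2) W(2) B_conv_indicators[OF sub(1) sub(3)] B_conv_indicators[OF sub(2) sub(3)]
    by (rule rho_rel_mult_set(2)[OF U(1) V(1) W(1) UV])
qed

lemma congruence_on_rho_rel:
  "congruence_on (steinberg_B T s r) B_add (B_conv T s r mu) (rho_rel T)"
  unfolding congruence_on_def
proof (intro conjI ballI impI)
  show "rho_rel T f f" for f by (rule rho_rel_refl)
  show "rho_rel T g f" if "rho_rel T f g" for f g using that by (rule rho_rel_sym)
  show "rho_rel T f h"
    if "f \<in> steinberg_B T s r" "g \<in> steinberg_B T s r" "h \<in> steinberg_B T s r"
      "rho_rel T f g \<and> rho_rel T g h" for f g h
    using rho_rel_compatible(1)[OF that(1-3)] that(4) by blast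
qed (fact rho_rel_compatible(2-4))+

text \<open>Compact subsets of \<open>\<G>\<close> need not be closed; their images under \<open>(s, r)\<close> are.\<close>
lemma not_in_closure_of_compactin_trivial_isotropy:
  assumes \<alpha>: "\<alpha> \<in> topspace T" and triv: "r \<alpha> \<in> \<T>" and K: "compactin T K" "\<alpha> \<notin> K"
  shows "\<alpha> \<notin> T closure_of K"
proof (rule not_in_closure_of_compactin)
  show "continuous_map T (prod_topology (subtopology T G0) (subtopology T G0)) (\<lambda>\<beta>. (s \<beta>, r \<beta>))"
    using continuous_map_source continuous_map_range by (rule continuous_map_pairedI)
  show "Hausdorff_space (prod_topology (subtopology T G0) (subtopology T G0))"
    by (simp add: Hausdorff_space_prod_topology Hausdorff_space_units)
  have "\<beta> \<noteq> \<alpha>" if "\<beta> \<in> K" for \<beta>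
    using that K(2) by blast
  moreover have "\<beta> = \<alpha>" if "\<beta> \<in> K" "s \<beta> = s \<alpha>" "r \<beta> = r \<alpha>" for \<beta>
    using eq_if_source_range_eq_trivial_isotropy[OF \<alpha> _ that(2,3) triv] that(1) K(1)
      compactin_subset_topspace by blast
  ultimately show "(s \<alpha>, r \<alpha>) \<notin> (\<lambda>\<beta>. (s \<beta>, r \<beta>)) ` K" by force
qed (fact K(1))

lemma not_in_closure_of_Union_compactin_trivial_isotropy:
  assumes "\<alpha> \<in> topspace T" "r \<alpha> \<in> \<T>" "finite F" "\<forall>K\<in>F. compactin T K" "\<alpha> \<notin> \<Union>F"
  shows "\<alpha> \<notin> T closure_of (\<Union>F)"
  using assms not_in_closure_of_compactin_trivial_isotropy by (simp add: closure_of_Union)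

lemma dense_trivial_isotropy_arrows:
  assumes "topologically_principal T G0 s r"
  shows "T closure_of {\<alpha> \<in> topspace T. s \<alpha> \<in> \<T> \<and> r \<alpha> \<in> \<T>} = topspace T"
  unfolding dense_intersects_open
proof (intro allI impI)
  fix N assume N: "openin T N \<and> N \<noteq> {}"
  have "(subtopology T G0) closure_of \<T> = topspace (subtopology T G0)"
    using assms units_subset_topspace unfolding topologically_principal_def
    by (simp add: inf.absorb2)
  moreover have "openin (subtopology T G0) (s ` N)"
    using open_map_source N unfolding open_map_def by blast
  moreover have "s ` N \<noteq> {}" using N by blast
  ultimately have "\<T> \<inter> s ` N \<noteq> {}"
    unfolding dense_intersects_open by blast
  then obtain y where y: "y \<in> N" "s y \<in> \<T>" by blast
  moreover have "y \<in> topspace T" using y(1) N openin_subset by blast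
  ultimately show "{\<alpha> \<in> topspace T. s \<alpha> \<in> \<T> \<and> r \<alpha> \<in> \<T>} \<inter> N \<noteq> {}"
    using range_in_trivial_isotropy_units by blast
qed

lemma rho_rel_iff_equiv_T:
  assumes tp: "topologically_principal T G0 s r"
    and f: "f \<in> steinberg_B T s r" and g: "g \<in> steinberg_B T s r"
  shows "rho_rel T f g \<longleftrightarrow> equiv_T T G0 s r f g"
proof -
  obtain F where F: "finite F" "\<forall>K\<in>F. compactin T K" "openin T (\<Union>F)" "f = (\<lambda>x. x \<in> \<Union>F)"
    using steinberg_B_indicator[OF f] by blast
  obtain H where H: "finite H" "\<forall>K\<in>H. compactin T K" "openin T (\<Union>H)" "g = (\<lambda>x. x \<in> \<Union>H)"
    using steinberg_B_indicator[OF g] by blast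
  define D where "D = {\<alpha> \<in> topspace T. s \<alpha> \<in> \<T> \<and> r \<alpha> \<in> \<T>}"
  have equiv: "equiv_T T G0 s r f g \<longleftrightarrow> \<Union>F \<inter> D = \<Union>H \<inter> D"
    unfolding equiv_T_def D_def F(4) H(4) by blast
  have closure: "\<Union>F \<subseteq> T closure_of (\<Union>F \<inter> D)" "\<Union>H \<subseteq> T closure_of (\<Union>H \<inter> D)"
    using openin_Int_closure_of_subset[OF F(3), of D] openin_Int_closure_of_subset[OF H(3), of D]
      dense_trivial_isotropy_arrows[OF tp] F(3) H(3) openin_subset unfolding D_def by blast+
  have rho: "rho_rel T f g \<longleftrightarrow> \<Union>F \<subseteq> T closure_of (\<Union>H) \<and> \<Union>H \<subseteq> T closure_of (\<Union>F)"
    unfolding F(4) H(4) by (rule rho_rel_indicator_iff[OF F(3) H(3)])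
  have in_closure_imp_in: "\<alpha> \<in> \<Union>K" if "\<alpha> \<in> D" "\<alpha> \<in> T closure_of (\<Union>K)" "finite K" "\<forall>C\<in>K. compactin T C"
    for \<alpha> K
    using that not_in_closure_of_Union_compactin_trivial_isotropy unfolding D_def by blast
  show ?thesis
    unfolding rho equiv
  proof
    assume "\<Union>F \<subseteq> T closure_of (\<Union>H) \<and> \<Union>H \<subseteq> T closure_of (\<Union>F)"
    then show "\<Union>F \<inter> D = \<Union>H \<inter> D"
      using in_closure_imp_in F(1,2) H(1,2) by blast
  next
    assume "\<Union>F \<inter> D = \<Union>H \<inter> D"
    then show "\<Union>F \<subseteq> T closure_of (\<Union>H) \<and> \<Union>H \<subseteq> T closure_of (\<Union>F)"
      using closure closure_of_mono[of "\<Union>F \<inter> D" "\<Union>H" T] closure_of_mono[of "\<Union>H \<inter> D" "\<Union>F" T]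
      by blast
  qed
qed

end

theorem lemma3p7:
  fixes T :: "'a topology" and G0 :: "'a set" and s r iv :: "'a \<Rightarrow> 'a"
    and mu :: "'a \<Rightarrow> 'a \<Rightarrow> 'a"
  assumes "ample_groupoid T G0 s r mu iv"
  shows "congruence_on (steinberg_B T s r) B_add (B_conv T s r mu) (rho_rel T) \<and>
         (topologically_principal T G0 s r \<longrightarrow>
         (\<forall>f\<in>steinberg_B T s r. \<forall>g\<in>steinberg_B T s r.
            rho_rel T f g \<longleftrightarrow> equiv_T T G0 s r f g))"
proof -
  interpret ample_setting T G0 s r iv mu
    using assms by unfold_locales
  show ?thesis
    using congruence_on_rho_rel rho_rel_iff_equiv_T by blast
qed

end
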